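(* Let $n\geq 1$ and let $C$ be a CRC in $G_n$ with covering radius $\rho\geq 1$, $a_0=0$ and $a_1=1$. Then $c_1=1$, and there is a CRC $D$ in the ternary Hamming graph $H(n,3)$ with the same parameter matrix such that $C=\{x\in\mathbb{Z}^n: (x_1\bmod 3,\ldots,x_n\bmod 3)\in D\}$.
   Context: $G_n$: vertex set $\mathbb{Z}^n$, $x\sim y$ iff $\sum_i|x_i-y_i|=1$. $H(n,3)$: vertex set $\{0,1,2\}^n$, adjacent iff differing in exactly one coordinate. For a code $C$ in a graph with covering radius $\rho$, $C_i=\{v:d(v,C)=i\}$; $C$ is a CRC if for all $i,j$ every vertex of $C_i$ has the same number $\alpha_{ij}$ of neighbours in $C_j$, with $\alpha_{ij}=0$ for $|i-j|>1$; $a_i=\alpha_{ii}$, $b_i=\alpha_{i,i+1}$, $c_i=\alpha_{i,i-1}$, and the parameter matrix is $(\alpha_{ij})$. *)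

theory Defs
  imports Main
begin

fun walk :: "'a set \<Rightarrow> ('a \<Rightarrow> 'a \<Rightarrow> bool) \<Rightarrow> nat \<Rightarrow> 'a \<Rightarrow> 'a \<Rightarrow> bool" where
  "walk V E 0 u v = (u = v)"
| "walk V E (Suc k) u v = (\<exists>w\<in>V. E u w \<and> walk V E k w v)"

definition dist_to :: "'a set \<Rightarrow> ('a \<Rightarrow> 'a \<Rightarrow> bool) \<Rightarrow> 'a set \<Rightarrow> 'a \<Rightarrow> nat" where
  "dist_to V E C v = (LEAST k. \<exists>c\<in>C. walk V E k v c)"

definition has_covering_radius :: "'a set \<Rightarrow> ('a \<Rightarrow> 'a \<Rightarrow> bool) \<Rightarrow> 'a set \<Rightarrow> nat \<Rightarrow> bool" where
  "has_covering_radius V E C \<rho> \<longleftrightarrow>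
     (\<forall>v\<in>V. \<exists>c\<in>C. \<exists>k. walk V E k v c) \<and>
     (\<forall>v\<in>V. dist_to V E C v \<le> \<rho>) \<and> (\<exists>v\<in>V. dist_to V E C v = \<rho>)"

definition is_CRC :: "'a set \<Rightarrow> ('a \<Rightarrow> 'a \<Rightarrow> bool) \<Rightarrow> 'a set \<Rightarrow> nat \<Rightarrow> (nat \<Rightarrow> nat \<Rightarrow> nat) \<Rightarrow> bool" where
  "is_CRC V E C \<rho> \<alpha> \<longleftrightarrow>
     C \<subseteq> V \<and> has_covering_radius V E C \<rho> \<and>
     (\<forall>i\<le>\<rho>. \<forall>j\<le>\<rho>. \<forall>v\<in>V. dist_to V E C v = i \<longrightarrow>
         card {w\<in>V. E v w \<and> dist_to V E C w = j} = \<alpha> i j) \<and>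
     (\<forall>i\<le>\<rho>. \<forall>j\<le>\<rho>. (i + 1 < j \<or> j + 1 < i) \<longrightarrow> \<alpha> i j = 0)"

definition Gn_verts :: "nat \<Rightarrow> (nat \<Rightarrow> int) set" where
  "Gn_verts n = {x. \<forall>i\<ge>n. x i = 0}"

definition Gn_adj :: "nat \<Rightarrow> (nat \<Rightarrow> int) \<Rightarrow> (nat \<Rightarrow> int) \<Rightarrow> bool" where
  "Gn_adj n x y \<longleftrightarrow> (\<Sum>i<n. \<bar>x i - y i\<bar>) = 1"

definition H3_verts :: "nat \<Rightarrow> (nat \<Rightarrow> nat) set" where
  "H3_verts n = {x. (\<forall>i<n. x i < 3) \<and> (\<forall>i\<ge>n. x i = 0)}"

definition H3_adj :: "nat \<Rightarrow> (nat \<Rightarrow> nat) \<Rightarrow> (nat \<Rightarrow> nat) \<Rightarrow> bool" where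
  "H3_adj n x y \<longleftrightarrow> card {i. i < n \<and> x i \<noteq> y i} = 1"

definition mod3 :: "(nat \<Rightarrow> int) \<Rightarrow> (nat \<Rightarrow> nat)" where
  "mod3 x = (\<lambda>i. nat (x i mod 3))"

end

theory Submission
  imports Defs
begin

text \<open>
  Write \<open>e\<^sub>i\<close> for the unit vectors. Since \<open>a\<^sub>0 = 0\<close>, all \<open>2n\<close> neighbours \<open>c \<plusminus> e\<^sub>i\<close> of a
  codeword \<open>c\<close> are at distance 1, and since \<open>a\<^sub>1 = 1\<close> every vertex at distance 1 has exactly
  one neighbour at distance 1. A vertex \<open>c + s e\<^sub>i + t e\<^sub>j\<close> with \<open>i \<noteq> j\<close> has the two such
  neighbours \<open>c + s e\<^sub>i\<close> and \<open>c + t e\<^sub>j\<close>, so it is not at distance 1. This forces the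
  distance-1 neighbour of \<open>c + s e\<^sub>i\<close> to be \<open>c + 2s e\<^sub>i\<close>, rules out codewords at grid
  distance 2 from \<open>c\<close> (whence \<open>c\<^sub>1 = 1\<close>), and finally forces the unique codeword adjacent
  to \<open>c + 2s e\<^sub>i\<close> to be \<open>c + 3s e\<^sub>i\<close>. So \<open>C\<close> is invariant under \<open>3\<int>\<^sup>n\<close>, i.e. it is the
  preimage of its reduction \<open>D\<close> mod 3. Reduction mod 3 maps the neighbourhood of each
  grid vertex bijectively onto that of its image in \<open>H(n,3)\<close>, because \<open>x + 1\<close> and \<open>x - 1\<close> hit the two
  residues other than \<open>x mod 3\<close>; hence walks lift, distances to \<open>C\<close> and to \<open>D\<close> agree, and
  \<open>D\<close> is completely regular with the same parameters.
\<close>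

lemma dist_to_le:
  assumes "walk V E k v c" and "c \<in> C"
  shows "dist_to V E C v \<le> k"
  unfolding dist_to_def by (rule Least_le) (use assms in blast)

lemma dist_to_walk:
  assumes "\<exists>c\<in>C. \<exists>k. walk V E k v c"
  shows "\<exists>c\<in>C. walk V E (dist_to V E C v) v c"
  unfolding dist_to_def by (rule LeastI_ex) (use assms in blast)

lemma dist_to_eq_0_iff:
  assumes "\<exists>c\<in>C. \<exists>k. walk V E k v c"
  shows "dist_to V E C v = 0 \<longleftrightarrow> v \<in> C"
  using dist_to_walk[OF assms] dist_to_le[of V E 0 v v C] by auto

lemma dist_to_le_Suc:
  assumes "w \<in> V" and "E v w" and "\<exists>c\<in>C. \<exists>k. walk V E k w c"
  shows "dist_to V E C v \<le> Suc (dist_to V E C w)"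
proof -
  obtain c where "c \<in> C" and "walk V E (dist_to V E C w) w c"
    using dist_to_walk[OF assms(3)] by blast
  then have "walk V E (Suc (dist_to V E C w)) v c"
    using assms(1,2) by auto
  then show ?thesis
    using \<open>c \<in> C\<close> by (rule dist_to_le)
qed

section \<open>Covering maps preserve complete regularity\<close>

definition covering_map ::
  "'a set \<Rightarrow> ('a \<Rightarrow> 'a \<Rightarrow> bool) \<Rightarrow> 'b set \<Rightarrow> ('b \<Rightarrow> 'b \<Rightarrow> bool) \<Rightarrow> ('a \<Rightarrow> 'b) \<Rightarrow> bool" where
  "covering_map V E V' E' p \<longleftrightarrow>
     p ` V = V' \<and> (\<forall>x\<in>V. bij_betw p {w\<in>V. E x w} {w'\<in>V'. E' (p x) w'})"

lemma covering_map_image_nbrs: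
  assumes "covering_map V E V' E' p" and "x \<in> V"
  shows "p ` {w\<in>V. E x w} = {w'\<in>V'. E' (p x) w'}"
  using assms unfolding covering_map_def bij_betw_def by simp

lemma covering_map_walk:
  assumes p: "covering_map V E V' E' p" and "x \<in> V" and "walk V E k x c"
  shows "walk V' E' k (p x) (p c)"
  using assms(2,3)
proof (induction k arbitrary: x)
  case (Suc k)
  then obtain w where w: "w \<in> V" "E x w" "walk V E k w c"
    by auto
  then have "p w \<in> {w'\<in>V'. E' (p x) w'}"
    using covering_map_image_nbrs[OF p \<open>x \<in> V\<close>] by blast
  with Suc.IH w show ?case
    by auto
qed simp

lemma covering_map_walk_lift:
  assumes p: "covering_map V E V' E' p" and "x \<in> V" and "walk V' E' k (p x) d"
  shows "\<exists>c\<in>V. p c = d \<and> walk V E k x c"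
  using assms(2,3)
proof (induction k arbitrary: x)
  case (Suc k)
  then obtain w' where w': "w' \<in> V'" "E' (p x) w'" "walk V' E' k w' d"
    by auto
  have "w' \<in> p ` {w\<in>V. E x w}"
    using covering_map_image_nbrs[OF p \<open>x \<in> V\<close>] w' by simp
  then obtain w where w: "w \<in> V" "E x w" "p w = w'"
    by blast
  then obtain c where "c \<in> V" "p c = d" "walk V E k w c"
    using Suc.IH w' by blast
  with w show ?case
    by auto
qed auto

lemma covering_map_walk_iff:
  assumes "covering_map V E V' E' p" and "C = {x\<in>V. p x \<in> D}" and "x \<in> V"
  shows "(\<exists>d\<in>D. walk V' E' k (p x) d) \<longleftrightarrow> (\<exists>c\<in>C. walk V E k x c)"
  using covering_map_walk[OF assms(1,3)] covering_map_walk_lift[OF assms(1,3)] assms(2)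
  by blast

lemma covering_map_dist_to:
  assumes "covering_map V E V' E' p" and "C = {x\<in>V. p x \<in> D}" and "x \<in> V"
  shows "dist_to V' E' D (p x) = dist_to V E C x"
  unfolding dist_to_def by (simp only: covering_map_walk_iff[OF assms])

theorem is_CRC_covering_quotient:
  assumes p: "covering_map V E V' E' p" and CRC: "is_CRC V E C \<rho> \<alpha>"
    and C: "C = {x\<in>V. p x \<in> D}" and "D \<subseteq> V'"
  shows "is_CRC V' E' D \<rho> \<alpha>"
proof -
  note dist = covering_map_dist_to[OF p C] and walk_iff = covering_map_walk_iff[OF p C]
  have V': "V' = p ` V"
    using p unfolding covering_map_def by simp
  from CRC have reach: "\<forall>v\<in>V. \<exists>c\<in>C. \<exists>k. walk V E k v c"
    and le: "\<forall>v\<in>V. dist_to V E C v \<le> \<rho>" and attained: "\<exists>v\<in>V. dist_to V E C v = \<rho>"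
    and count: "\<forall>i\<le>\<rho>. \<forall>j\<le>\<rho>. \<forall>v\<in>V. dist_to V E C v = i \<longrightarrow>
         card {w\<in>V. E v w \<and> dist_to V E C w = j} = \<alpha> i j"
    and tridiagonal: "\<forall>i\<le>\<rho>. \<forall>j\<le>\<rho>. (i + 1 < j \<or> j + 1 < i) \<longrightarrow> \<alpha> i j = 0"
    unfolding is_CRC_def has_covering_radius_def by auto
  have "\<forall>v'\<in>V'. \<exists>d\<in>D. \<exists>k. walk V' E' k v' d"
    using reach walk_iff unfolding V' by blast
  moreover have "\<forall>v'\<in>V'. dist_to V' E' D v' \<le> \<rho>" and "\<exists>v'\<in>V'. dist_to V' E' D v' = \<rho>"
    using le attained dist unfolding V' by auto
  moreover have "\<forall>i\<le>\<rho>. \<forall>j\<le>\<rho>. \<forall>v'\<in>V'. dist_to V' E' D v' = i \<longrightarrow>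
      card {w'\<in>V'. E' v' w' \<and> dist_to V' E' D w' = j} = \<alpha> i j"
  proof (intro allI impI ballI)
    fix i j v'
    assume "i \<le> \<rho>" "j \<le> \<rho>" "v' \<in> V'" "dist_to V' E' D v' = i"
    then obtain x where x: "x \<in> V" "v' = p x" "dist_to V E C x = i"
      using V' dist by auto
    have "bij_betw p {w\<in>V. E x w} {w'\<in>V'. E' v' w'}"
      using p x unfolding covering_map_def by simp
    then have "bij_betw p {w\<in>{w\<in>V. E x w}. dist_to V E C w = j}
        {w'\<in>{w'\<in>V'. E' v' w'}. dist_to V' E' D w' = j}"
      by (rule bij_betw_Collect) (simp add: dist)
    then have "card {w'\<in>V'. E' v' w' \<and> dist_to V' E' D w' = j} =
        card {w\<in>V. E x w \<and> dist_to V E C w = j}"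
      by (simp add: bij_betw_same_card)
    also have "\<dots> = \<alpha> i j"
      using count \<open>i \<le> \<rho>\<close> \<open>j \<le> \<rho>\<close> x by blast
    finally show "card {w'\<in>V'. E' v' w' \<and> dist_to V' E' D w' = j} = \<alpha> i j" .
  qed
  ultimately show ?thesis
    using \<open>D \<subseteq> V'\<close> tridiagonal unfolding is_CRC_def has_covering_radius_def
    by (intro conjI) assumption+
qed

definition move :: "(nat \<Rightarrow> int) \<Rightarrow> nat \<Rightarrow> int \<Rightarrow> nat \<Rightarrow> int" where
  "move x i s = x(i := x i + s)"

lemma move_in_Gn_verts: "x \<in> Gn_verts n \<Longrightarrow> i < n \<Longrightarrow> move x i s \<in> Gn_verts n"
  by (simp add: Gn_verts_def move_def)

lemma move_move: "move (move x i s) i t = move x i (s + t)"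
  by (simp add: move_def add.assoc)

lemma move_0 [simp]: "move x i 0 = x"
  by (simp add: move_def)

lemma move_move_uminus [simp]: "move (move x i s) i (- s) = x"
  by (simp add: move_move)

lemma move_commute: "i \<noteq> j \<Longrightarrow> move (move x i s) j t = move (move x j t) i s"
  by (simp add: move_def fun_upd_twist)

lemma move_eq_move_iff: "s \<noteq> 0 \<Longrightarrow> t \<noteq> 0 \<Longrightarrow> move x i s = move x j t \<longleftrightarrow> i = j \<and> s = t"
  unfolding move_def by (metis add_left_cancel add_0_right fun_upd_eqD fun_upd_other fun_upd_same)

lemma Gn_adj_sym: "Gn_adj n x y \<longleftrightarrow> Gn_adj n y x"
  unfolding Gn_adj_def by (simp add: abs_minus_commute)

lemma Gn_adj_move: "i < n \<Longrightarrow> s \<in> {1, -1} \<Longrightarrow> Gn_adj n x (move x i s)"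
proof -
  assume "i < n" "s \<in> {1, -1}"
  then have "(\<Sum>k<n. \<bar>x k - move x i s k\<bar>) = (\<Sum>k<n. if k = i then 1 else 0)"
    by (intro sum.cong) (auto simp: move_def)
  then show ?thesis
    using \<open>i < n\<close> unfolding Gn_adj_def by simp
qed

lemma Gn_adj_move_back: "i < n \<Longrightarrow> s \<in> {1, -1} \<Longrightarrow> Gn_adj n (move x i s) x"
  by (simp add: Gn_adj_sym Gn_adj_move)

lemma Gn_adj_imp_move:
  assumes "x \<in> Gn_verts n" and "y \<in> Gn_verts n" and "Gn_adj n x y"
  shows "\<exists>i<n. \<exists>s\<in>{1, -1}. y = move x i s"
proof -
  have sum1: "(\<Sum>k<n. \<bar>x k - y k\<bar>) = 1"
    using assms(3) unfolding Gn_adj_def .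
  then obtain i where i: "i < n" "x i \<noteq> y i"
    by (metis (no_types, lifting) diff_self abs_zero sum.neutral lessThan_iff zero_neq_one)
  have "(\<Sum>k<n. \<bar>x k - y k\<bar>) = \<bar>x i - y i\<bar> + (\<Sum>k\<in>{..<n} - {i}. \<bar>x k - y k\<bar>)"
    using i by (simp add: sum.remove)
  moreover have "(\<Sum>k\<in>{..<n} - {i}. \<bar>x k - y k\<bar>) \<ge> 0" and "\<bar>x i - y i\<bar> \<ge> 1"
    using i by (auto intro: sum_nonneg)
  ultimately have "\<bar>x i - y i\<bar> = 1" and "(\<Sum>k\<in>{..<n} - {i}. \<bar>x k - y k\<bar>) = 0"
    using sum1 by linarith+
  then have step: "y i - x i \<in> {1, -1}" and near: "\<forall>k\<in>{..<n} - {i}. x k = y k"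
    by (auto simp: sum_nonneg_eq_0_iff)
  have "y k = x k" if "k \<noteq> i" for k
    using near assms(1,2) that by (cases "k < n") (auto simp: Gn_verts_def)
  then have "y = move x i (y i - x i)"
    by (auto simp: move_def)
  then show ?thesis
    using i step by blast
qed

lemma finite_Gn_nbrs: "x \<in> Gn_verts n \<Longrightarrow> finite {w\<in>Gn_verts n. Gn_adj n x w}"
proof -
  assume "x \<in> Gn_verts n"
  then have "{w\<in>Gn_verts n. Gn_adj n x w} \<subseteq> (\<lambda>(i, s). move x i s) ` ({..<n} \<times> {1, -1})"
    using Gn_adj_imp_move by fastforce
  then show ?thesis
    by (rule finite_subset) simp
qed

lemma of_nat_mod3 [simp]: "int (mod3 x i) = x i mod 3"
  by (simp add: mod3_def)

lemma mod3_eq_iff: "mod3 x = mod3 y \<longleftrightarrow> (\<forall>i. x i mod 3 = y i mod 3)"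
  by (metis of_nat_mod3 of_nat_eq_iff fun_eq_iff)

lemma mod3_move_3_mult [simp]: "mod3 (move x i (3 * k)) = mod3 x"
  by (simp add: mod3_eq_iff move_def)

lemma mod3_move: "mod3 (move x i s) = (mod3 x)(i := nat ((x i + s) mod 3))"
  by (simp add: mod3_def move_def fun_eq_iff)

lemma mod3_eq_closed:
  assumes "A \<subseteq> Gn_verts n"
    and closed: "\<And>a i k. a \<in> A \<Longrightarrow> i < n \<Longrightarrow> move a i (3 * k) \<in> A"
    and "x \<in> A" and "y \<in> Gn_verts n" and "mod3 x = mod3 y"
  shows "y \<in> A"
proof -
  have "\<forall>x\<in>A. mod3 x = mod3 y \<longrightarrow> (\<forall>i\<ge>m. x i = y i) \<longrightarrow> y \<in> A" if "m \<le> n" for m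
    using that
  proof (induction m)
    case 0
    have "x = y" if "\<forall>i\<ge>0. x i = y i" for x :: "nat \<Rightarrow> int"
      using that by (simp add: fun_eq_iff)
    then show ?case
      by blast
  next
    case (Suc m)
    show ?case
    proof (intro ballI impI)
      fix x assume "x \<in> A" "mod3 x = mod3 y" "\<forall>i\<ge>Suc m. x i = y i"
      then obtain k where k: "y m - x m = 3 * k"
        by (metis mod3_eq_iff mod_eq_dvd_iff dvd_def)
      then have "move x m (3 * k) \<in> A" and "mod3 (move x m (3 * k)) = mod3 y"
        using closed \<open>x \<in> A\<close> Suc.prems \<open>mod3 x = mod3 y\<close> by auto
      moreover have "\<forall>i\<ge>m. move x m (3 * k) i = y i"
      proof (intro allI impI)
        fix i assume "m \<le> i"
        then show "move x m (3 * k) i = y i"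
          using k \<open>\<forall>i\<ge>Suc m. x i = y i\<close> by (cases "i = m") (auto simp: move_def)
      qed
      ultimately show "y \<in> A"
        using Suc by auto
    qed
  qed
  moreover have "\<forall>i\<ge>n. x i = y i"
    using assms(1,3,4) by (auto simp: Gn_verts_def)
  ultimately show ?thesis
    using assms(3,5) by blast
qed

section \<open>Reduction mod 3 as a covering map onto \<open>H(n,3)\<close>\<close>

lemma mod_3_cases:
  obtains "(a :: int) mod 3 = 0" | "a mod 3 = 1" | "a mod 3 = 2"
  using pos_mod_sign[of 3 a] pos_mod_bound[of 3 a] by linarith

lemma mod_3_add_unit_neq:
  assumes "s \<in> {1, -1}"
  shows "(a + s) mod 3 \<noteq> (a :: int) mod 3"
proof -
  have "(a + s) mod 3 = (a mod 3 + s) mod 3"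
    by (simp add: mod_add_left_eq)
  then show ?thesis
    using assms by (cases rule: mod_3_cases[of a]) auto
qed

lemma mod_3_add_unit_inj:
  assumes "s \<in> {1, -1}" and "t \<in> {1, -1}" and "(a + s) mod 3 = ((a :: int) + t) mod 3"
  shows "s = t"
proof -
  have "(a + u) mod 3 = (a mod 3 + u) mod 3" for u
    by (simp add: mod_add_left_eq)
  then show ?thesis
    using assms by (cases rule: mod_3_cases[of a]) auto
qed

lemma mod_3_add_unit_surj:
  assumes "b \<in> {0..2}" and "b \<noteq> (a :: int) mod 3"
  shows "\<exists>s\<in>{1, -1}. (a + s) mod 3 = b"
proof -
  have "(a + u) mod 3 = (a mod 3 + u) mod 3" for u
    by (simp add: mod_add_left_eq)
  moreover have "b = 0 \<or> b = 1 \<or> b = 2"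
    using assms(1) by auto
  ultimately show ?thesis
    using assms(2) by (cases rule: mod_3_cases[of a]) auto
qed

lemma mod3_in_H3_verts: "x \<in> Gn_verts n \<Longrightarrow> mod3 x \<in> H3_verts n"
  by (auto simp: Gn_verts_def H3_verts_def mod3_def nat_less_iff)

lemma mod3_image_Gn_verts: "mod3 ` Gn_verts n = H3_verts n"
proof
  show "H3_verts n \<subseteq> mod3 ` Gn_verts n"
  proof
    fix h assume h: "h \<in> H3_verts n"
    then have "nat (int (h i) mod 3) = h i" for i
      by (cases "i < n") (auto simp: H3_verts_def)
    then have "h = mod3 (\<lambda>i. int (h i))"
      by (simp add: mod3_def fun_eq_iff)
    moreover have "(\<lambda>i. int (h i)) \<in> Gn_verts n"
      using h by (simp add: Gn_verts_def H3_verts_def)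
    ultimately show "h \<in> mod3 ` Gn_verts n"
      by blast
  qed
qed (auto intro: mod3_in_H3_verts)

lemma H3_adj_iff: "H3_adj n a b \<longleftrightarrow> (\<exists>i<n. a i \<noteq> b i \<and> (\<forall>j<n. j \<noteq> i \<longrightarrow> a j = b j))"
proof
  assume "H3_adj n a b"
  then obtain i where "{j. j < n \<and> a j \<noteq> b j} = {i}"
    unfolding H3_adj_def by (auto simp: card_1_singleton_iff)
  then show "\<exists>i<n. a i \<noteq> b i \<and> (\<forall>j<n. j \<noteq> i \<longrightarrow> a j = b j)"
    by blast
next
  assume "\<exists>i<n. a i \<noteq> b i \<and> (\<forall>j<n. j \<noteq> i \<longrightarrow> a j = b j)"
  then obtain i where "{j. j < n \<and> a j \<noteq> b j} = {i}"
    by blast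
  then show "H3_adj n a b"
    unfolding H3_adj_def by simp
qed

lemma H3_adj_mod3_move:
  assumes "i < n" and "s \<in> {1, -1}"
  shows "H3_adj n (mod3 x) (mod3 (move x i s))"
proof -
  have "int (mod3 (move x i s) i) = (x i + s) mod 3"
    by (simp add: move_def)
  then have "mod3 x i \<noteq> mod3 (move x i s) i"
    using mod_3_add_unit_neq[OF assms(2), of "x i"] by (metis of_nat_mod3)
  moreover have "\<forall>j<n. j \<noteq> i \<longrightarrow> mod3 x j = mod3 (move x i s) j"
    by (simp add: mod3_move)
  ultimately show ?thesis
    using assms(1) by (auto simp: H3_adj_iff)
qed

lemma H3_nbr_lift:
  assumes x: "x \<in> Gn_verts n" and h: "h \<in> H3_verts n" and "H3_adj n (mod3 x) h"
  shows "\<exists>i<n. \<exists>s\<in>{1, -1}. mod3 (move x i s) = h"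
proof -
  obtain i where i: "i < n" "mod3 x i \<noteq> h i" "\<forall>j<n. j \<noteq> i \<longrightarrow> mod3 x j = h j"
    using \<open>H3_adj n (mod3 x) h\<close> by (auto simp: H3_adj_iff)
  have "int (h i) \<in> {0..2}"
    using h i by (auto simp: H3_verts_def)
  moreover have "int (h i) \<noteq> x i mod 3"
    using i(2) by (metis of_nat_mod3 of_nat_eq_iff)
  ultimately obtain s where s: "s \<in> {1, -1}" "(x i + s) mod 3 = int (h i)"
    using mod_3_add_unit_surj by blast
  have "mod3 (move x i s) j = h j" for j
  proof -
    consider "j = i" | "j \<noteq> i" "j < n" | "n \<le> j"
      using i(1) by linarith
    then show ?thesis
    proof cases
      case 1
      then show ?thesis
        using s(2) by (simp add: mod3_move)
    next
      case 2
      then show ?thesis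
        using i(3) by (simp add: mod3_move)
    next
      case 3
      then show ?thesis
        using x h i(1) by (simp add: Gn_verts_def H3_verts_def mod3_def move_def)
    qed
  qed
  then show ?thesis
    using i(1) s(1) by (auto simp: fun_eq_iff)
qed

lemma mod3_image_Gn_nbrs:
  assumes "x \<in> Gn_verts n"
  shows "mod3 ` {w\<in>Gn_verts n. Gn_adj n x w} = {h\<in>H3_verts n. H3_adj n (mod3 x) h}"
proof (intro equalityI subsetI)
  fix h assume "h \<in> mod3 ` {w\<in>Gn_verts n. Gn_adj n x w}"
  then obtain w where "w \<in> Gn_verts n" "Gn_adj n x w" "h = mod3 w"
    by blast
  then obtain i s where i: "i < n" "s \<in> {1, -1}" and h: "h = mod3 (move x i s)"
    using Gn_adj_imp_move[OF assms] by blast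
  then show "h \<in> {h\<in>H3_verts n. H3_adj n (mod3 x) h}"
    using mod3_in_H3_verts[OF move_in_Gn_verts[OF assms i(1)]] H3_adj_mod3_move[OF i] by simp
next
  fix h assume "h \<in> {h\<in>H3_verts n. H3_adj n (mod3 x) h}"
  then obtain i s where i: "i < n" "s \<in> {1, -1}" and h: "h = mod3 (move x i s)"
    using H3_nbr_lift[OF assms] by blast
  then show "h \<in> mod3 ` {w\<in>Gn_verts n. Gn_adj n x w}"
    using move_in_Gn_verts[OF assms i(1)] Gn_adj_move[OF i] by blast
qed

lemma inj_on_mod3_Gn_nbrs:
  assumes "x \<in> Gn_verts n"
  shows "inj_on mod3 {w\<in>Gn_verts n. Gn_adj n x w}"
proof (rule inj_onI)
  fix w1 w2
  assume w1: "w1 \<in> {w\<in>Gn_verts n. Gn_adj n x w}" and w2: "w2 \<in> {w\<in>Gn_verts n. Gn_adj n x w}"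
    and eq: "mod3 w1 = mod3 w2"
  obtain i s where i: "i < n" "s \<in> {1, -1}" "w1 = move x i s"
    using Gn_adj_imp_move[OF assms] w1 by blast
  obtain j t where j: "j < n" "t \<in> {1, -1}" "w2 = move x j t"
    using Gn_adj_imp_move[OF assms] w2 by blast
  have coord: "w1 k mod 3 = w2 k mod 3" for k
    using eq by (simp add: mod3_eq_iff)
  have "i = j"
  proof (rule ccontr)
    assume "i \<noteq> j"
    then have "(x i + s) mod 3 = x i mod 3"
      using coord[of i] i j by (simp add: move_def)
    then show False
      using mod_3_add_unit_neq[OF i(2)] by blast
  qed
  moreover have "(x i + s) mod 3 = (x i + t) mod 3"
    using coord[of i] i j \<open>i = j\<close> by (simp add: move_def)
  then have "s = t"
    by (rule mod_3_add_unit_inj[OF i(2) j(2)])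
  ultimately show "w1 = w2"
    using i j by simp
qed

lemma covering_map_mod3: "covering_map (Gn_verts n) (Gn_adj n) (H3_verts n) (H3_adj n) mod3"
  by (simp add: covering_map_def bij_betw_def mod3_image_Gn_verts mod3_image_Gn_nbrs
      inj_on_mod3_Gn_nbrs)

section \<open>Grid codes with \<open>a\<^sub>0 = 0\<close> and \<open>a\<^sub>1 = 1\<close>\<close>

locale grid_CRC =
  fixes n \<rho> :: nat and C :: "(nat \<Rightarrow> int) set" and \<alpha> :: "nat \<Rightarrow> nat \<Rightarrow> nat"
  assumes CRC: "is_CRC (Gn_verts n) (Gn_adj n) C \<rho> \<alpha>"
    and radius_ge_1: "\<rho> \<ge> 1"
    and a0: "\<alpha> 0 0 = 0"
    and a1: "\<alpha> 1 1 = 1"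
begin

abbreviation "V \<equiv> Gn_verts n"
abbreviation "E \<equiv> Gn_adj n"
abbreviation "d \<equiv> dist_to V E C"

lemma C_subset_V: "C \<subseteq> V"
  using CRC unfolding is_CRC_def by simp

lemma reachable: "v \<in> V \<Longrightarrow> \<exists>c\<in>C. \<exists>k. walk V E k v c"
  using CRC unfolding is_CRC_def has_covering_radius_def by blast

lemma card_nbrs_at_dist:
  "i \<le> \<rho> \<Longrightarrow> j \<le> \<rho> \<Longrightarrow> v \<in> V \<Longrightarrow> d v = i \<Longrightarrow> card {w\<in>V. E v w \<and> d w = j} = \<alpha> i j"
  using CRC unfolding is_CRC_def by blast

lemma dist_eq_0_iff: "v \<in> V \<Longrightarrow> d v = 0 \<longleftrightarrow> v \<in> C"
  by (simp add: dist_to_eq_0_iff reachable)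

lemma dist_codeword: "c \<in> C \<Longrightarrow> d c = 0"
  using C_subset_V dist_eq_0_iff by blast

lemma dist_le_Suc: "v \<in> V \<Longrightarrow> w \<in> V \<Longrightarrow> E v w \<Longrightarrow> d w \<le> Suc (d v)"
  by (rule dist_to_le_Suc) (auto simp: Gn_adj_sym reachable)

lemma move_codeword_notin:
  assumes c: "c \<in> C" and "i < n" and "s \<in> {1, -1}"
  shows "move c i s \<notin> C"
proof
  assume "move c i s \<in> C"
  have "c \<in> V"
    using c C_subset_V by blast
  have "finite {w\<in>V. E c w \<and> d w = 0}"
    by (rule finite_subset[OF _ finite_Gn_nbrs[OF \<open>c \<in> V\<close>]]) blast
  moreover have "card {w\<in>V. E c w \<and> d w = 0} = 0"
    using card_nbrs_at_dist[of 0 0 c] \<open>c \<in> V\<close> c a0 dist_eq_0_iff by simp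
  moreover have "move c i s \<in> {w\<in>V. E c w \<and> d w = 0}"
    using \<open>move c i s \<in> C\<close> C_subset_V Gn_adj_move[OF \<open>i < n\<close> \<open>s \<in> {1, -1}\<close>] dist_eq_0_iff
    by blast
  ultimately show False
    by (metis card_0_eq empty_iff)
qed

lemma dist_move_codeword:
  assumes "c \<in> C" and "i < n" and "s \<in> {1, -1}"
  shows "d (move c i s) = 1"
proof -
  have "c \<in> V" and "move c i s \<in> V"
    using assms C_subset_V move_in_Gn_verts by blast+
  then have "d (move c i s) \<le> Suc (d c)"
    using dist_le_Suc Gn_adj_move[OF assms(2,3)] by blast
  moreover have "d c = 0" and "d (move c i s) \<noteq> 0"
    using assms \<open>c \<in> V\<close> \<open>move c i s \<in> V\<close> dist_eq_0_iff move_codeword_notin by blast+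
  ultimately show ?thesis
    by simp
qed

lemma dist_1_nbr_unique:
  assumes "v \<in> V" "d v = 1"
    and "w1 \<in> V" "E v w1" "d w1 = 1" and "w2 \<in> V" "E v w2" "d w2 = 1"
  shows "w1 = w2"
proof -
  have "card {w\<in>V. E v w \<and> d w = 1} = 1"
    using card_nbrs_at_dist[of 1 1 v] radius_ge_1 a1 assms(1,2) by simp
  then obtain z where z: "{w\<in>V. E v w \<and> d w = 1} = {z}"
    by (auto simp: card_1_singleton_iff)
  have "w1 \<in> {w\<in>V. E v w \<and> d w = 1}" and "w2 \<in> {w\<in>V. E v w \<and> d w = 1}"
    using assms(3-8) by simp_all
  then show ?thesis
    unfolding z by simp
qed

lemma dist_1_nbr_exists: "v \<in> V \<Longrightarrow> d v = 1 \<Longrightarrow> \<exists>w\<in>V. E v w \<and> d w = 1"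
  using card_nbrs_at_dist[of 1 1 v] radius_ge_1 a1 by (auto simp: card_1_singleton_iff)

lemma codeword_nbr_exists: "v \<in> V \<Longrightarrow> d v = 1 \<Longrightarrow> \<exists>c\<in>C. E v c"
  using dist_to_walk[OF reachable, of v] by (auto simp: numeral_eq_Suc)

lemma dist_move_move_neq_1:
  assumes c: "c \<in> C" and "i < n" "j < n" "i \<noteq> j" and "s \<in> {1, -1}" "t \<in> {1, -1}"
  shows "d (move (move c i s) j t) \<noteq> 1"
proof
  let ?x = "move c i s" and ?z = "move c j t" and ?y = "move (move c i s) j t"
  assume "d ?y = 1"
  have "c \<in> V"
    using c C_subset_V by blast
  then have V: "?x \<in> V" "?y \<in> V" "?z \<in> V"
    using assms move_in_Gn_verts by blast+
  have "?y = move ?z i s"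
    using move_commute[OF \<open>i \<noteq> j\<close>] .
  then have "E ?y ?z"
    using Gn_adj_move_back assms by metis
  moreover have "E ?y ?x"
    using Gn_adj_move_back assms by metis
  moreover have "?x \<noteq> ?z"
    using assms move_eq_move_iff by auto
  ultimately show False
    using dist_1_nbr_unique[OF V(2) \<open>d ?y = 1\<close>] V dist_move_codeword assms by blast
qed

lemma dist_move_move_same:
  assumes c: "c \<in> C" and "i < n" and "s \<in> {1, -1}"
  shows "d (move (move c i s) i s) = 1"
proof -
  let ?x = "move c i s"
  have "?x \<in> V"
    using assms C_subset_V move_in_Gn_verts by blast
  moreover have "d ?x = 1"
    using dist_move_codeword assms by blast
  ultimately obtain w where w: "w \<in> V" "E ?x w" "d w = 1"
    using dist_1_nbr_exists by blast
  then obtain k u where k: "k < n" "u \<in> {1, -1}" "w = move ?x k u"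
    using Gn_adj_imp_move[OF \<open>?x \<in> V\<close>] by blast
  have "k = i"
    using dist_move_move_neq_1[OF c \<open>i < n\<close> k(1) _ \<open>s \<in> {1, -1}\<close> k(2)] w(3) k(3) by blast
  moreover have "u \<noteq> - s"
  proof
    assume "u = - s"
    then have "w = c"
      using k \<open>k = i\<close> by simp
    then show False
      using w(3) dist_codeword[OF c] by simp
  qed
  ultimately have "w = move ?x i s"
    using k \<open>s \<in> {1, -1}\<close> by auto
  then show ?thesis
    using w by simp
qed

lemma codeword_two_moves_eq:
  assumes c: "c \<in> C" and i: "i < n" "s \<in> {1, -1}" and k: "k < n" "u \<in> {1, -1}"
    and c': "move (move c i s) k u \<in> C"
  shows "move (move c i s) k u = c"
proof -
  have "k = i"
  proof (rule ccontr)
    assume "k \<noteq> i"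
    let ?z = "move c k u"
    have "?z \<in> V"
      using c k C_subset_V move_in_Gn_verts by blast
    have "move (move c i s) k u = move ?z i s"
      using move_commute[OF \<open>k \<noteq> i\<close>[symmetric]] .
    then have z: "?z = move (move (move c i s) k u) i (- s)"
      by simp
    have "d (move ?z k u) = 1"
      using dist_move_move_same[OF c k] .
    moreover have s': "- s \<in> {1, -1}"
      using i(2) by auto
    moreover have "d (move ?z i (- s)) = 1"
      unfolding z by (rule dist_move_move_same[OF c' i(1) s'])
    ultimately have "move ?z k u = move ?z i (- s)"
      using dist_1_nbr_unique[OF \<open>?z \<in> V\<close> dist_move_codeword[OF c k]] \<open>?z \<in> V\<close> i(1) k
        move_in_Gn_verts Gn_adj_move by blast
    then show False
      using \<open>k \<noteq> i\<close> i k move_eq_move_iff by auto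
  qed
  moreover have "u \<noteq> s"
  proof
    assume "u = s"
    then have "d (move (move c i s) k u) = 1"
      using dist_move_move_same[OF c i] \<open>k = i\<close> by simp
    then show False
      using dist_codeword[OF c'] by simp
  qed
  ultimately show ?thesis
    using i k by (auto simp: move_move)
qed

lemma alpha_1_0:
  assumes "0 < n"
  shows "\<alpha> 1 0 = 1"
proof -
  obtain c where c: "c \<in> C"
    using reachable[of "\<lambda>_. 0"] by (auto simp: Gn_verts_def)
  let ?x = "move c 0 1"
  have "c \<in> V" and "?x \<in> V"
    using c assms C_subset_V move_in_Gn_verts by blast+
  have "{w\<in>V. E ?x w \<and> d w = 0} = {c}"
  proof (intro equalityI subsetI)
    fix w assume "w \<in> {w\<in>V. E ?x w \<and> d w = 0}"
    then have "w \<in> C" and "E ?x w" and "w \<in> V"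
      using dist_eq_0_iff by auto
    then obtain k u where "k < n" "u \<in> {1, -1}" "w = move ?x k u"
      using Gn_adj_imp_move[OF \<open>?x \<in> V\<close>] by blast
    then show "w \<in> {c}"
      using codeword_two_moves_eq[OF c assms] \<open>w \<in> C\<close> by auto
  next
    fix w assume "w \<in> {c}"
    then show "w \<in> {w\<in>V. E ?x w \<and> d w = 0}"
      using \<open>c \<in> V\<close> c assms Gn_adj_move_back[of 0 n 1 c] dist_eq_0_iff by auto
  qed
  then show ?thesis
    using card_nbrs_at_dist[of 1 0 ?x] radius_ge_1 \<open>?x \<in> V\<close> dist_move_codeword[OF c assms] by simp
qed

lemma codeword_move_3:
  assumes c: "c \<in> C" and i: "i < n" "s \<in> {1, -1}"
  shows "move c i (3 * s) \<in> C"
proof -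
  let ?x = "move c i s" and ?y = "move (move c i s) i s"
  have "c \<in> V"
    using c C_subset_V by blast
  then have V: "?x \<in> V" "?y \<in> V"
    using i move_in_Gn_verts by blast+
  have dx: "d ?x = 1" and dy: "d ?y = 1"
    using dist_move_codeword[OF c i] dist_move_move_same[OF c i] .
  obtain w where w: "w \<in> C" "E ?y w"
    using codeword_nbr_exists[OF V(2) dy] by blast
  then have "w \<in> V"
    using C_subset_V by blast
  then obtain k u where k: "k < n" "u \<in> {1, -1}" and w_eq: "w = move ?y k u"
    using Gn_adj_imp_move[OF V(2) \<open>w \<in> V\<close> w(2)] by blast
  have u': "- u \<in> {1, -1}" and s': "- s \<in> {1, -1}"
    using k(2) i(2) by auto
  have "k = i"
  proof (rule ccontr)
    assume "k \<noteq> i"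
    \<comment> \<open>then \<open>?y\<close> would have a second neighbour at distance 1 besides \<open>?x\<close>\<close>
    have "?y = move w k (- u)"
      using w_eq by simp
    then have "d (move ?y k (- u)) = 1"
      using dist_move_move_same[OF w(1) k(1) u'] by simp
    moreover have "?x = move ?y i (- s)"
      by simp
    ultimately have "move ?y k (- u) = move ?y i (- s)"
      using dist_1_nbr_unique[OF V(2) dy] dx V k(1) i(1) u' s' move_in_Gn_verts Gn_adj_move
      by metis
    moreover have "- u \<noteq> 0" "- s \<noteq> 0"
      using u' s' by auto
    ultimately show False
      using \<open>k \<noteq> i\<close> move_eq_move_iff by blast
  qed
  moreover have "u \<noteq> - s"
  proof
    assume "u = - s"
    then have "w = ?x"
      using w_eq \<open>k = i\<close> by simp
    then show False
      using dx dist_codeword[OF w(1)] by simp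
  qed
  ultimately have "w = move ?y i s"
    using w_eq k(2) i(2) by auto
  then show ?thesis
    using w(1) by (simp add: move_move algebra_simps)
qed

lemma codeword_move_3_mult:
  assumes "c \<in> C" and "i < n"
  shows "move c i (3 * k) \<in> C"
proof -
  have "\<forall>c\<in>C. move c i (3 * k) \<in> C"
  proof (induction k rule: int_induct[where k = 0])
    case base
    then show ?case
      by simp
  next
    case (step1 k)
    have "move c i (3 * (k + 1)) = move (move c i (3 * k)) i (3 * 1)" for c
      by (simp add: move_move algebra_simps)
    then show ?case
      using step1 codeword_move_3[OF _ \<open>i < n\<close>, of _ 1] by simp
  next
    case (step2 k)
    have "move c i (3 * (k - 1)) = move (move c i (3 * k)) i (3 * - 1)" for c
      by (simp add: move_move algebra_simps)
    then show ?case
      using step2 codeword_move_3[OF _ \<open>i < n\<close>, of _ "- 1"] by simp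
  qed
  then show ?thesis
    using assms(1) by blast
qed

lemma C_eq_mod3_preimage: "C = {x\<in>V. mod3 x \<in> mod3 ` C}"
proof (intro equalityI subsetI)
  fix x assume "x \<in> {x\<in>V. mod3 x \<in> mod3 ` C}"
  then obtain c where "c \<in> C" "mod3 c = mod3 x" and "x \<in> V"
    by force
  then show "x \<in> C"
    using mod3_eq_closed[OF C_subset_V codeword_move_3_mult] by blast
qed (use C_subset_V in blast)

end

theorem mainTheorem7:
  fixes n \<rho> :: nat and C :: "(nat \<Rightarrow> int) set" and \<alpha> :: "nat \<Rightarrow> nat \<Rightarrow> nat"
  assumes "n \<ge> 1"
    and "is_CRC (Gn_verts n) (Gn_adj n) C \<rho> \<alpha>"
    and "\<rho> \<ge> 1"
    and "\<alpha> 0 0 = 0"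
    and "\<alpha> 1 1 = 1"
  shows "\<alpha> 1 0 = 1 \<and>
    (\<exists>D. is_CRC (H3_verts n) (H3_adj n) D \<rho> \<alpha> \<and>
         C = {x \<in> Gn_verts n. mod3 x \<in> D})"
proof -
  interpret grid_CRC n \<rho> C \<alpha>
    using assms(2-5) by unfold_locales
  have "mod3 ` C \<subseteq> H3_verts n"
    using C_subset_V mod3_in_H3_verts by blast
  then have "is_CRC (H3_verts n) (H3_adj n) (mod3 ` C) \<rho> \<alpha>"
    using is_CRC_covering_quotient[OF covering_map_mod3 CRC C_eq_mod3_preimage] by blast
  moreover have "\<alpha> 1 0 = 1"
    using alpha_1_0 assms(1) by simp
  ultimately show ?thesis
    using C_eq_mod3_preimage by blast
qed

end
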